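(* Let $(F,+,\cdot)$ be a (left) near-field, $I$ an index set, and $\boldsymbol\sigma=(\sigma_i)_{i\in I}$, $\boldsymbol\rho=(\rho_i)_{i\in I}$ families of multiplicative automorphisms of $F$. Let $\boldsymbol{\mathrm{Id}}=(\mathrm{Id})_{i\in I}$ and $\boldsymbol\theta=(\sigma_i\circ\rho_i)_{i\in I}$. Then (1) $F^{\boldsymbol\sigma,\boldsymbol\rho}\simeq F^{\boldsymbol\theta,\boldsymbol{\mathrm{Id}}}$, and (2) $F^{\boldsymbol\sigma,\boldsymbol\rho}\simeq F^{\boldsymbol{\mathrm{Id}},\boldsymbol\theta}$, as near-vector spaces.
   Context: A (left) near-field is $(F,+,\cdot,0,1)$ where $(F,\cdot,1)$ is a monoid, $(F\setminus\{0\},\cdot)$ is a group, $(F,+,0)$ is an abelian group, and $\alpha(\beta+\gamma)=\alpha\beta+\alpha\gamma$. A multiplicative automorphism is a monoid automorphism of $(F,\cdot)$. For $\tau$ multiplicative, $\alpha+_\tau\beta=\tau^{-1}(\tau(\alpha)+\tau(\beta))$. For families $\boldsymbol\sigma=(\sigma_i)_{i\in I}$, $\boldsymbol\rho=(\rho_i)_{i\in I}$ of multiplicative automorphisms, $F^{\boldsymbol\sigma,\boldsymbol\rho}$ is the set of finitely supported $(\alpha_i)_{i\in I}\in F^I$ with addition $(\alpha_i)+_{\boldsymbol\sigma}(\beta_i)=(\alpha_i+_{\sigma_i}\beta_i)$ and scalar multiplication $\alpha\cdot_{\boldsymbol\rho}(\alpha_i)=(\rho_i(\alpha)\alpha_i)$;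 it is a near-vector space over the scalar group $(F,\cdot,1,0,-1)$. An isomorphism of near-vector spaces $V_1\to V_2$ over $F$ is a pair $(\theta,\eta)$ with $\theta$ an additive bijection and $\eta$ a monoid automorphism of $F\setminus\{0\}$ such that $\theta(\alpha u)=\eta(\alpha)\theta(u)$. *)

theory Defs
  imports Main
begin

definition near_field :: "'a::{ab_group_add,monoid_mult} itself \<Rightarrow> bool" where
  "near_field _ \<longleftrightarrow>
     (1::'a) \<noteq> 0 \<and>
     (\<forall>a b::'a. a \<noteq> 0 \<longrightarrow> b \<noteq> 0 \<longrightarrow> a * b \<noteq> 0) \<and>
     (\<forall>a::'a. a \<noteq> 0 \<longrightarrow> (\<exists>b. b \<noteq> 0 \<and> a * b = 1 \<and> b * a = 1)) \<and>
     (\<forall>a b c::'a. a * (b + c) = a * b + a * c)"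

definition mult_aut :: "('a::monoid_mult \<Rightarrow> 'a) \<Rightarrow> bool" where
  "mult_aut \<tau> \<longleftrightarrow> bij \<tau> \<and> \<tau> 1 = 1 \<and> (\<forall>a b. \<tau> (a * b) = \<tau> a * \<tau> b)"

definition add_tw :: "('a::{plus,times} \<Rightarrow> 'a) \<Rightarrow> 'a \<Rightarrow> 'a \<Rightarrow> 'a" where
  "add_tw \<tau> a b = inv \<tau> (\<tau> a + \<tau> b)"

text \<open>Carrier of F^{sigma,rho}: finitely supported families indexed by the type 'i.\<close>
definition fsupp :: "('i \<Rightarrow> 'a::zero) set" where
  "fsupp = {u. finite {i. u i \<noteq> 0}}"

definition vadd :: "('i \<Rightarrow> 'a \<Rightarrow> 'a) \<Rightarrow> ('i \<Rightarrow> 'a::{plus,times}) \<Rightarrow> ('i \<Rightarrow> 'a) \<Rightarrow> ('i \<Rightarrow> 'a)" where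
  "vadd \<sigma> u v = (\<lambda>i. add_tw (\<sigma> i) (u i) (v i))"

definition smul :: "('i \<Rightarrow> 'a \<Rightarrow> 'a) \<Rightarrow> 'a::times \<Rightarrow> ('i \<Rightarrow> 'a) \<Rightarrow> ('i \<Rightarrow> 'a)" where
  "smul \<rho> a u = (\<lambda>i. \<rho> i a * u i)"

definition nvs_iso ::
  "('i \<Rightarrow> 'a \<Rightarrow> 'a) \<Rightarrow> ('i \<Rightarrow> 'a \<Rightarrow> 'a) \<Rightarrow> ('i \<Rightarrow> 'a \<Rightarrow> 'a) \<Rightarrow> ('i \<Rightarrow> 'a \<Rightarrow> 'a)
    \<Rightarrow> (('i \<Rightarrow> 'a) \<Rightarrow> ('i \<Rightarrow> 'a)) \<Rightarrow> ('a::{ab_group_add,monoid_mult} \<Rightarrow> 'a) \<Rightarrow> bool" where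
  "nvs_iso s1 r1 s2 r2 th \<eta> \<longleftrightarrow>
     bij_betw th fsupp fsupp \<and>
     (\<forall>u\<in>fsupp. \<forall>v\<in>fsupp. th (vadd s1 u v) = vadd s2 (th u) (th v)) \<and>
     bij_betw \<eta> (UNIV - {0}) (UNIV - {0}) \<and> \<eta> 1 = 1 \<and> \<eta> 0 = 0 \<and>
     (\<forall>a b. a \<noteq> 0 \<longrightarrow> b \<noteq> 0 \<longrightarrow> \<eta> (a * b) = \<eta> a * \<eta> b) \<and>
     (\<forall>a. \<forall>u\<in>fsupp. th (smul r1 a u) = smul r2 (\<eta> a) (th u))"

definition nvs_isomorphic ::
  "('i \<Rightarrow> 'a \<Rightarrow> 'a) \<Rightarrow> ('i \<Rightarrow> 'a \<Rightarrow> 'a) \<Rightarrow> ('i \<Rightarrow> 'a \<Rightarrow> 'a) \<Rightarrow> ('i \<Rightarrow> 'a::{ab_group_add,monoid_mult} \<Rightarrow> 'a) \<Rightarrow> bool" where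
  "nvs_isomorphic s1 r1 s2 r2 \<longleftrightarrow> (\<exists>th \<eta>. nvs_iso s1 r1 s2 r2 th \<eta>)"

end

theory Submission
  imports Defs
begin

text \<open>Transporting every coordinate along a multiplicative automorphism \<open>\<phi> i\<close> that
fixes 0 is an isomorphism from \<open>F^(\<sigma>,\<rho>)\<close> onto \<open>F^(\<sigma>',\<rho>')\<close> with
\<open>\<sigma>' i = \<sigma> i \<circ> inv (\<phi> i)\<close>, \<open>\<rho>' i = \<phi> i \<circ> \<rho> i\<close> and \<open>\<eta> = id\<close>. Choosing
\<open>\<phi> i = inv (\<rho> i)\<close> moves the whole twist into the addition; choosing \<open>\<phi> i = \<sigma> i\<close>
moves it into the scalar multiplication.\<close>

lemma near_field_mult_zero_right:
  assumes "near_field TYPE('a::{ab_group_add,monoid_mult})"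
  shows "(x::'a) * 0 = 0"
proof -
  have "x * (0 + 0) = x * 0 + x * 0"
    using assms unfolding near_field_def by blast
  then show ?thesis by simp
qed

lemma near_field_mult_zero_left:
  assumes nf: "near_field TYPE('a::{ab_group_add,monoid_mult})"
  shows "0 * (a::'a) = 0"
proof (cases "a = 0")
  case True
  then show ?thesis using near_field_mult_zero_right[OF nf] by simp
next
  case False
  then obtain b where "b \<noteq> 0" and "a * b = 1"
    using nf unfolding near_field_def by blast
  then have "0 * a * b = 0"
    by (simp add: mult.assoc near_field_mult_zero_right[OF nf])
  with \<open>b \<noteq> 0\<close> show ?thesis
    using nf unfolding near_field_def by blast
qed

lemma mult_aut_zero:
  assumes nf: "near_field TYPE('a::{ab_group_add,monoid_mult})" and "mult_aut (\<tau>::'a \<Rightarrow> 'a)"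
  shows "\<tau> 0 = 0"
proof -
  have "bij \<tau>" and mult: "\<And>a b. \<tau> (a * b) = \<tau> a * \<tau> b"
    using assms(2) unfolding mult_aut_def by auto
  then obtain z where z: "\<tau> z = 0" by (metis bij_is_surj surjD)
  have "\<tau> 0 = \<tau> 0 * \<tau> z"
    using mult[of 0 z] by (simp add: near_field_mult_zero_left[OF nf])
  then show ?thesis by (simp add: z near_field_mult_zero_right[OF nf])
qed

lemma mult_aut_inv:
  assumes "mult_aut (\<tau>::'a::monoid_mult \<Rightarrow> 'a)"
  shows "mult_aut (inv \<tau>)"
proof -
  have bij: "bij \<tau>" and "\<tau> 1 = 1" and mult: "\<And>a b. \<tau> (a * b) = \<tau> a * \<tau> b"
    using assms unfolding mult_aut_def by auto
  have "\<tau> (inv \<tau> a * inv \<tau> b) = a * b" for a b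
    using mult bij by (simp add: bij_is_surj surj_f_inv_f)
  then have "inv \<tau> (a * b) = inv \<tau> a * inv \<tau> b" for a b
    using bij by (metis bij_inv_eq_iff)
  then show ?thesis
    using bij \<open>\<tau> 1 = 1\<close> unfolding mult_aut_def by (metis bij_imp_bij_inv bij_inv_eq_iff)
qed

lemma bij_betw_fsupp_componentwise:
  fixes \<phi> :: "'i \<Rightarrow> 'a::zero \<Rightarrow> 'a"
  assumes bij: "\<And>i. bij (\<phi> i)" and zero: "\<And>i. \<phi> i 0 = 0"
  shows "bij_betw (\<lambda>u i. \<phi> i (u i)) fsupp fsupp"
proof (rule bij_betw_byWitness[where f' = "\<lambda>u i. inv (\<phi> i) (u i)"])
  have inv_zero: "inv (\<phi> i) 0 = 0" for i
    by (metis bij zero bij_inv_eq_iff)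
  have "{i. \<phi> i (u i) \<noteq> 0} = {i. u i \<noteq> 0}" for u
    using zero bij by (metis bij_is_inj inj_eq)
  moreover have "{i. inv (\<phi> i) (u i) \<noteq> 0} = {i. u i \<noteq> 0}" for u
    using inv_zero bij by (metis bij_imp_bij_inv bij_is_inj inj_eq)
  ultimately show "(\<lambda>u i. \<phi> i (u i)) ` fsupp \<subseteq> fsupp"
    and "(\<lambda>u i. inv (\<phi> i) (u i)) ` fsupp \<subseteq> fsupp"
    by (auto simp: fsupp_def)
qed (simp_all add: bij bij_is_inj bij_is_surj inv_f_f surj_f_inv_f)

lemma add_tw_transport:
  assumes "bij \<sigma>" and "bij \<phi>"
  shows "\<phi> (add_tw \<sigma> a b) = add_tw (\<sigma> \<circ> inv \<phi>) (\<phi> a) (\<phi> b)"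
proof -
  have "inv (\<sigma> \<circ> inv \<phi>) = \<phi> \<circ> inv \<sigma>"
    using assms by (simp add: o_inv_distrib bij_imp_bij_inv inv_inv_eq)
  then show ?thesis
    using assms by (simp add: add_tw_def bij_is_inj inv_f_f)
qed

lemma nvs_iso_componentwise:
  fixes \<sigma> \<rho> \<phi> :: "'i \<Rightarrow> 'a::{ab_group_add,monoid_mult} \<Rightarrow> 'a"
  assumes "\<forall>i. mult_aut (\<sigma> i)" and "\<forall>i. mult_aut (\<phi> i)" and "\<And>i. \<phi> i 0 = 0"
  shows "nvs_iso \<sigma> \<rho> (\<lambda>i. \<sigma> i \<circ> inv (\<phi> i)) (\<lambda>i. \<phi> i \<circ> \<rho> i) (\<lambda>u i. \<phi> i (u i)) id"
proof -
  have "bij (\<sigma> i)" and "bij (\<phi> i)" and "\<phi> i (a * b) = \<phi> i a * \<phi> i b" for i a b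
    using assms(1,2) unfolding mult_aut_def by auto
  then show ?thesis
    unfolding nvs_iso_def
    by (simp add: bij_betw_fsupp_componentwise assms(3) vadd_def smul_def add_tw_transport)
qed

theorem lemma3p14:
  fixes \<sigma> \<rho> :: "'i \<Rightarrow> 'a::{ab_group_add,monoid_mult} \<Rightarrow> 'a"
  assumes "near_field TYPE('a)"
    and "\<forall>i. mult_aut (\<sigma> i)"
    and "\<forall>i. mult_aut (\<rho> i)"
  shows "nvs_isomorphic \<sigma> \<rho> (\<lambda>i. \<sigma> i \<circ> \<rho> i) (\<lambda>i. id)
       \<and> nvs_isomorphic \<sigma> \<rho> (\<lambda>i. id) (\<lambda>i. \<sigma> i \<circ> \<rho> i)"
proof
  have bij_\<sigma>: "bij (\<sigma> i)" and bij_\<rho>: "bij (\<rho> i)" for i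
    using assms(2,3) unfolding mult_aut_def by auto
  have "nvs_iso \<sigma> \<rho> (\<lambda>i. \<sigma> i \<circ> inv (inv (\<rho> i))) (\<lambda>i. inv (\<rho> i) \<circ> \<rho> i)
      (\<lambda>u i. inv (\<rho> i) (u i)) id"
    using assms mult_aut_inv mult_aut_zero[OF assms(1)]
    by (intro nvs_iso_componentwise) auto
  then show "nvs_isomorphic \<sigma> \<rho> (\<lambda>i. \<sigma> i \<circ> \<rho> i) (\<lambda>i. id)"
    unfolding nvs_isomorphic_def using bij_\<rho>
    by (auto simp: inv_inv_eq bij_is_inj inv_o_cancel)
  have "nvs_iso \<sigma> \<rho> (\<lambda>i. \<sigma> i \<circ> inv (\<sigma> i)) (\<lambda>i. \<sigma> i \<circ> \<rho> i) (\<lambda>u i. \<sigma> i (u i)) id"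
    using assms mult_aut_zero[OF assms(1)] by (intro nvs_iso_componentwise) auto
  moreover have "(\<lambda>i. \<sigma> i \<circ> inv (\<sigma> i)) = (\<lambda>i. id)"
    by (rule ext) (metis bij_\<sigma> bij_is_surj surj_iff)
  ultimately show "nvs_isomorphic \<sigma> \<rho> (\<lambda>i. id) (\<lambda>i. \<sigma> i \<circ> \<rho> i)"
    unfolding nvs_isomorphic_def by auto
qed

end
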